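(* Let $R\ge1$, $m\ge R+2$, let $A$ be a real $m\times R$ matrix with $\operatorname{rank}(A)=R$ and $\iota_m\notin\operatorname{col}(A)$, let $C$ be a real symmetric positive semidefinite $m\times m$ matrix, and suppose $\operatorname{null}\big((A,\iota_m)^\top\big)\not\subseteq\operatorname{null}(C)$. Let $v^\ast$ be any minimiser of $v^\top Cv$ over $\mathcal V=\{v\in\mathbb R^m: v^\top A=0_R^\top,\ v^\top\iota_m=1\}$. Then there exists at least one vector $u^\ast\in\mathbb R^m$ such that $$u^{\ast\top}A=0_R^\top,\qquad u^{\ast\top}\iota_m=0,\qquad u^{\ast\top}Cu^\ast=v^{\ast\top}Cv^\ast,$$ and any such $u^\ast$ satisfies $u^{\ast\top}Cv^\ast=0$.
   Context: $\iota_m$ is the $m$-vector of ones; $0_R$ the zero vector in $\mathbb R^R$; $\operatorname{col}$ and $\operatorname{null}$ denote column space and null space; $(A,\iota_m)$ is the $m\times(R+1)$ matrix obtained by appending $\iota_m$ as a last column to $A$. A vector $u^\ast$ as in the claim is called a variance weights vector. *)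

theory Defs
  imports "HOL-Analysis.Analysis"
begin

end

theory Submission
  imports Defs
begin

(* Along every feasible direction u (u^T A = 0, u^T iota = 0) the quadratic q(v) = v^T C v
   restricted to the line vstar + t u is minimal at t = 0, so its linear coefficient
   2 u^T C vstar vanishes.  A variance weights vector is a rescaling of any direction w
   with C w \<noteq> 0, which exists by the null space hypothesis; w^T C w > 0 because for
   positive semidefinite C the quadratic form only vanishes on the null space of C. *)

lemma linear_term_zero_if_quadratic_nonneg:
  fixes a b :: real
  assumes nonneg: "\<forall>t. 0 \<le> 2*t*b + t^2*a"
  shows "b = 0"
proof -
  define s where "s = 1 / (\<bar>a\<bar> + 1)"
  have s_pos: "s > 0" unfolding s_def by simp
  have "s * a \<le> s * \<bar>a\<bar>" using s_pos by (simp add: mult_left_mono)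
  also have "\<dots> < 1" unfolding s_def by (simp add: field_simps)
  finally have sa_lt: "s * a < 1" .
  define t where "t = - (b * s)"
  have "0 \<le> 2*t*b + t^2*a" using nonneg by blast
  also have "\<dots> = b^2 * s * (s*a - 2)" unfolding t_def by (simp add: power2_eq_square algebra_simps)
  finally have "0 \<le> b^2 * s * (s*a - 2)" .
  moreover have "s*a - 2 < 0" using sa_lt by simp
  ultimately have "b^2 * s \<le> 0"
    by (metis mult_less_0_iff linorder_not_le order_less_le_trans)
  with s_pos show ?thesis by (simp add: mult_le_0_iff)
qed

lemma inner_matrix_vector_symmetric:
  fixes C :: "real^'n^'n"
  assumes "transpose C = C"
  shows "u \<bullet> (C *v v) = v \<bullet> (C *v u)"
proof -
  have "u \<bullet> (C *v v) = (u v* C) \<bullet> v" by (simp add: dot_lmul_matrix)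
  also have "u v* C = C *v u" using vector_transpose_matrix[of u C] assms by simp
  finally show ?thesis by (simp add: inner_commute)
qed

lemma quadratic_form_add_scaleR:
  fixes C :: "real^'n^'n"
  assumes "transpose C = C"
  shows "(v + t *\<^sub>R u) \<bullet> (C *v (v + t *\<^sub>R u))
           = v \<bullet> (C *v v) + 2*t*(u \<bullet> (C *v v)) + t^2*(u \<bullet> (C *v u))"
  using inner_matrix_vector_symmetric[OF assms, of v u]
  by (simp add: matrix_vector_right_distrib matrix_vector_mult_scaleR inner_add_left
      inner_add_right power2_eq_square distrib_left mult.assoc)

lemma quadratic_form_min_on_line_imp_orthogonal:
  fixes C :: "real^'n^'n"
  assumes "transpose C = C"
    and "\<forall>t. v \<bullet> (C *v v) \<le> (v + t *\<^sub>R u) \<bullet> (C *v (v + t *\<^sub>R u))"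
  shows "u \<bullet> (C *v v) = 0"
  using assms by (intro linear_term_zero_if_quadratic_nonneg) (simp add: quadratic_form_add_scaleR)

lemma psd_quadratic_form_eq_0_imp_mult_eq_0:
  fixes C :: "real^'n^'n"
  assumes "transpose C = C"
    and "\<forall>x. 0 \<le> x \<bullet> (C *v x)"
    and "w \<bullet> (C *v w) = 0"
  shows "C *v w = 0"
proof -
  \<comment> \<open>w minimises the form globally, in particular along the direction C w\<close>
  have "(C *v w) \<bullet> (C *v w) = 0"
    using assms by (intro quadratic_form_min_on_line_imp_orthogonal) auto
  then show ?thesis by simp
qed

lemma psd_quadratic_form_pos_if_mult_nonzero:
  fixes C :: "real^'n^'n"
  assumes "transpose C = C" and "\<forall>x. 0 \<le> x \<bullet> (C *v x)" and "C *v w \<noteq> 0"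
  shows "w \<bullet> (C *v w) > 0"
  using assms psd_quadratic_form_eq_0_imp_mult_eq_0 by (metis order_less_le)

lemma quadratic_form_scaleR:
  fixes C :: "real^'n^'n"
  shows "(c *\<^sub>R w) \<bullet> (C *v (c *\<^sub>R w)) = c^2 * (w \<bullet> (C *v w))"
  by (simp add: matrix_vector_mult_scaleR power2_eq_square)

lemma quadratic_form_attains_nonneg_on_ray:
  fixes C :: "real^'n^'n"
  assumes "w \<bullet> (C *v w) > 0" and "q \<ge> 0"
  shows "\<exists>c. (c *\<^sub>R w) \<bullet> (C *v (c *\<^sub>R w)) = q"
  unfolding quadratic_form_scaleR using assms
  by (intro exI[of _ "sqrt (q / (w \<bullet> (C *v w)))"]) simp

(* The hypotheses m_ge, rankA and iota_not_col only ensure that a minimiser vstar exists. *)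
theorem theorem2:
  fixes A :: "real^'r^'m" and C :: "real^'m^'m" and vstar :: "real^'m"
  assumes m_ge: "CARD('m) \<ge> CARD('r) + 2"
    and rankA: "rank A = CARD('r)"
    and iota_not_col: "vec 1 \<notin> range (\<lambda>x. A *v x)"
    and C_sym: "transpose C = C"
    and C_psd: "\<forall>x. 0 \<le> x \<bullet> (C *v x)"
    and not_sub: "\<not> ({v. transpose A *v v = 0 \<and> v \<bullet> vec 1 = 0} \<subseteq> {v. C *v v = 0})"
    and vstar_feas: "vstar v* A = 0 \<and> vstar \<bullet> vec 1 = 1"
    and vstar_min: "\<forall>v. v v* A = 0 \<and> v \<bullet> vec 1 = 1 \<longrightarrow> vstar \<bullet> (C *v vstar) \<le> v \<bullet> (C *v v)"
  shows "(\<exists>u. u v* A = 0 \<and> u \<bullet> vec 1 = 0 \<and> u \<bullet> (C *v u) = vstar \<bullet> (C *v vstar))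
       \<and> (\<forall>u. u v* A = 0 \<and> u \<bullet> vec 1 = 0 \<and> u \<bullet> (C *v u) = vstar \<bullet> (C *v vstar)
              \<longrightarrow> u \<bullet> (C *v vstar) = 0)"
proof (intro conjI allI impI)
  obtain w where w_feas: "w v* A = 0" "w \<bullet> vec 1 = 0" and "C *v w \<noteq> 0"
    using not_sub vector_transpose_matrix[of _ "transpose A"] by auto
  then have "w \<bullet> (C *v w) > 0"
    using C_sym C_psd psd_quadratic_form_pos_if_mult_nonzero by blast
  then obtain c where "(c *\<^sub>R w) \<bullet> (C *v (c *\<^sub>R w)) = vstar \<bullet> (C *v vstar)"
    using C_psd quadratic_form_attains_nonneg_on_ray by blast
  with w_feas show "\<exists>u. u v* A = 0 \<and> u \<bullet> vec 1 = 0 \<and> u \<bullet> (C *v u) = vstar \<bullet> (C *v vstar)"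
    by (intro exI[of _ "c *\<^sub>R w"]) (simp add: scaleR_vector_matrix_assoc)
next
  fix u assume "u v* A = 0 \<and> u \<bullet> vec 1 = 0 \<and> u \<bullet> (C *v u) = vstar \<bullet> (C *v vstar)"
  then have "(vstar + t *\<^sub>R u) v* A = 0 \<and> (vstar + t *\<^sub>R u) \<bullet> vec 1 = 1" for t
    using vstar_feas
    by (simp add: vector_matrix_left_distrib scaleR_vector_matrix_assoc inner_add_left)
  then show "u \<bullet> (C *v vstar) = 0"
    using C_sym vstar_min by (intro quadratic_form_min_on_line_imp_orthogonal) auto
qed

end
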